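(* Let $L>0$, $K>0$, $L_p a>0$, $t_0>0$, $\nu_m>0$, and let $\sigma_1,\sigma_2,p_0,w_0,w_D,q_l$ be real constants. Put $\beta = \frac{L_p a L^2}{K}$. Let $p,u,w$ be twice continuously differentiable functions on $[0,1]$ satisfying $$\frac{1}{t_0}\frac{d}{dx}\Big(\nu_m \frac{dp}{dx}\Big) - \sigma_1\frac{d}{dx}\Big(\nu_m \frac{du}{dx}\Big) - \sigma_2\frac{d}{dx}\Big(\nu_m\frac{dw}{dx}\Big) + q_U - q_l = 0 \quad\text{on } [0,1],$$ where $$q_U(x) = \beta\Big(\frac{1}{t_0}(p_0-p(x)) + \sigma_1 u(x) + \sigma_2 (w(x)-w_0)\Big),$$ together with the boundary conditions $p(0)=1$, $u(0)=1$, $w(0)=w_D$, $p'(1)=u'(1)=w'(1)=0$. Define $$j_U(x) = L\nu_m\Big(-\frac{1}{t_0}p'(x) + \sigma_1 u'(x) + \sigma_2 w'(x)\Big).$$ Then $j_U = \frac{K\nu_m}{L_p a L}\, q_U'$ and, with $$\lambda=\sqrt{\frac{L_p a L^2}{K\nu_m}},\quad q_0 = \beta\Big(\frac{1}{t_0}(p_0-1)+\sigma_1+\sigma_2 (w_D - w_0)\Big),\quad C_1=(q_0-q_l)\frac{e^{2\lambda}}{1+e^{2\lambda}},\quad C_2=(q_0-q_l)\frac{1}{1+e^{2\lambda}},$$ one has for all $x\in[0,1]$ $$q_U(x) = C_1 e^{-\lambda x} + C_2 e^{\lambda x} + q_l,\qquad j_U(x) = \frac{L}{\lambda}\big(-C_1e^{-\lambda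 x}+C_2 e^{\lambda x}\big).$$
   Context: This is the steady-state fluid balance equation of a non-dimensionalised model of fluid, glucose and albumin transport in peritoneal dialysis, under the assumptions that the reflection coefficients in tissue and capillary wall coincide ($S_G=S_{TG}$, $S_A=S_{TA}$) and that the fractional void volume $\nu$ equals the constant $\nu_m$. Here $x\in[0,1]$ is the non-dimensional distance from the peritoneal surface, $p$ the non-dimensional hydrostatic pressure, $u$ and $w$ non-dimensional glucose and albumin concentrations, $q_U$ the density of fluid flux from blood to tissue, $j_U$ the fluid flux across the tissue, $q_l$ the lymphatic flux density; $w_D$ is the non-dimensional albumin concentration in dialysate and $w_0$ that in blood. *)

theory Defs
  imports "HOL-Analysis.Analysis"
begin

definition C2_on_unit :: "(real \<Rightarrow> real) \<Rightarrow> (real \<Rightarrow> real) \<Rightarrow> (real \<Rightarrow> real) \<Rightarrow> bool" where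
  "C2_on_unit f f1 f2 \<longleftrightarrow>
     (\<forall>x\<in>{0..1}. (f has_real_derivative f1 x) (at x within {0..1})) \<and>
     (\<forall>x\<in>{0..1}. (f1 has_real_derivative f2 x) (at x within {0..1})) \<and>
     continuous_on {0..1} f2"

end

theory Submission
  imports Defs
begin

text \<open>Eliminating p, u and w in favour of the single quantity q_U turns the fluid balance
  into q_U'' = \<lambda>^2 (q_U - q_l), while j_U is a constant multiple of q_U'. The general solution
  of this equation is q_l + A e^{\<lambda>x} + B e^{-\<lambda>x}; the Dirichlet condition q_U(0) = q_0
  (from p(0) = u(0) = 1, w(0) = w_D) and the Neumann condition q_U'(1) = 0 (from
  p'(1) = u'(1) = w'(1) = 0) determine A and B.\<close>

lemma C2_on_unit_linear_combination:
  assumes "C2_on_unit f f' f''" "C2_on_unit g g' g''" "C2_on_unit h h' h''"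
  shows "C2_on_unit (\<lambda>x. a + b * f x + c * g x + d * h x)
           (\<lambda>x. b * f' x + c * g' x + d * h' x) (\<lambda>x. b * f'' x + c * g'' x + d * h'' x)"
  using assms unfolding C2_on_unit_def
  by (auto intro!: derivative_eq_intros continuous_intros)

lemma exp_weighted_first_integral:
  fixes q dq ddq :: "real \<Rightarrow> real" and S :: "real set"
  assumes "convex S"
    and q: "\<And>x. x \<in> S \<Longrightarrow> (q has_real_derivative dq x) (at x within S)"
    and dq: "\<And>x. x \<in> S \<Longrightarrow> (dq has_real_derivative ddq x) (at x within S)"
    and ode: "\<And>x. x \<in> S \<Longrightarrow> ddq x = \<mu>\<^sup>2 * (q x - c)"
  obtains K where "\<And>x. x \<in> S \<Longrightarrow> (dq x + \<mu> * (q x - c)) * exp (-\<mu> * x) = K"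
proof -
  have "\<exists>K. \<forall>x\<in>S. (dq x + \<mu> * (q x - c)) * exp (-\<mu> * x) = K"
  proof (rule has_field_derivative_zero_constant[OF \<open>convex S\<close>])
    fix x assume x: "x \<in> S"
    have "((\<lambda>x. (dq x + \<mu> * (q x - c)) * exp (-\<mu> * x)) has_real_derivative
        (ddq x + \<mu> * dq x) * exp (-\<mu> * x) + (dq x + \<mu> * (q x - c)) * (exp (-\<mu> * x) * - \<mu>))
        (at x within S)"
      using q[OF x] dq[OF x] by (auto intro!: derivative_eq_intros)
    moreover have "(ddq x + \<mu> * dq x) * exp (-\<mu> * x) + (dq x + \<mu> * (q x - c)) * (exp (-\<mu> * x) * - \<mu>) = 0"
      unfolding ode[OF x] by (simp add: algebra_simps power2_eq_square)
    ultimately show "((\<lambda>x. (dq x + \<mu> * (q x - c)) * exp (-\<mu> * x)) has_real_derivative 0) (at x within S)"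
      by simp
  qed
  then show ?thesis using that by blast
qed

lemma exp_second_order_ode_general_solution:
  fixes q dq ddq :: "real \<Rightarrow> real" and S :: "real set"
  assumes "convex S" "\<kappa> \<noteq> 0"
    and q: "\<And>x. x \<in> S \<Longrightarrow> (q has_real_derivative dq x) (at x within S)"
    and dq: "\<And>x. x \<in> S \<Longrightarrow> (dq has_real_derivative ddq x) (at x within S)"
    and ode: "\<And>x. x \<in> S \<Longrightarrow> ddq x = \<kappa>\<^sup>2 * (q x - c)"
  obtains A B where "\<And>x. x \<in> S \<Longrightarrow> q x = c + A * exp (\<kappa> * x) + B * exp (-\<kappa> * x)"
    and "\<And>x. x \<in> S \<Longrightarrow> dq x = \<kappa> * (A * exp (\<kappa> * x) - B * exp (-\<kappa> * x))"
proof -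
  obtain P where P: "\<And>x. x \<in> S \<Longrightarrow> (dq x + \<kappa> * (q x - c)) * exp (-\<kappa> * x) = P"
    using exp_weighted_first_integral[OF \<open>convex S\<close> q dq ode] by blast
  obtain M where M: "\<And>x. x \<in> S \<Longrightarrow> (dq x + -\<kappa> * (q x - c)) * exp (- (-\<kappa>) * x) = M"
    using exp_weighted_first_integral[OF \<open>convex S\<close> q dq, of "-\<kappa>" c] ode by auto
  show ?thesis
  proof (rule that[of "P / (2 * \<kappa>)" "- M / (2 * \<kappa>)"])
    fix x assume x: "x \<in> S"
    have "dq x + \<kappa> * (q x - c) = (dq x + \<kappa> * (q x - c)) * exp (-\<kappa> * x) * exp (\<kappa> * x)"
      by (simp add: mult.assoc flip: exp_add)
    also have "\<dots> = P * exp (\<kappa> * x)"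
      using P[OF x] by simp
    finally have plus: "dq x + \<kappa> * (q x - c) = P * exp (\<kappa> * x)" .
    have "dq x - \<kappa> * (q x - c) = (dq x + -\<kappa> * (q x - c)) * exp (- (-\<kappa>) * x) * exp (-\<kappa> * x)"
      by (simp add: mult.assoc flip: exp_add)
    also have "\<dots> = M * exp (-\<kappa> * x)"
      using M[OF x] by simp
    finally have minus: "dq x - \<kappa> * (q x - c) = M * exp (-\<kappa> * x)" .
    from plus minus have "2 * \<kappa> * (q x - c) = P * exp (\<kappa> * x) - M * exp (-\<kappa> * x)"
      and "2 * dq x = P * exp (\<kappa> * x) + M * exp (-\<kappa> * x)"
      by algebra+
    with \<open>\<kappa> \<noteq> 0\<close> show "q x = c + P / (2 * \<kappa>) * exp (\<kappa> * x) + - M / (2 * \<kappa>) * exp (-\<kappa> * x)"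
      and "dq x = \<kappa> * (P / (2 * \<kappa>) * exp (\<kappa> * x) - - M / (2 * \<kappa>) * exp (-\<kappa> * x))"
      by (simp_all add: field_simps, algebra)
  qed
qed

lemma exp_second_order_ode_mixed_bvp:
  fixes q dq ddq :: "real \<Rightarrow> real"
  assumes "\<kappa> \<noteq> 0" and "C2_on_unit q dq ddq"
    and ode: "\<forall>x\<in>{0..1}. ddq x = \<kappa>\<^sup>2 * (q x - c)"
    and "q 0 = q0" and "dq 1 = 0"
  defines "C1 \<equiv> (q0 - c) * exp (2 * \<kappa>) / (1 + exp (2 * \<kappa>))"
    and "C2 \<equiv> (q0 - c) / (1 + exp (2 * \<kappa>))"
  assumes "x \<in> {0..1}"
  shows "q x = C1 * exp (-\<kappa> * x) + C2 * exp (\<kappa> * x) + c"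
    and "dq x = \<kappa> * (- C1 * exp (-\<kappa> * x) + C2 * exp (\<kappa> * x))"
proof -
  obtain A B where qAB: "\<And>x. x \<in> {0..1} \<Longrightarrow> q x = c + A * exp (\<kappa> * x) + B * exp (-\<kappa> * x)"
    and dqAB: "\<And>x. x \<in> {0..1} \<Longrightarrow> dq x = \<kappa> * (A * exp (\<kappa> * x) - B * exp (-\<kappa> * x))"
    using exp_second_order_ode_general_solution[OF convex_real_interval(5) \<open>\<kappa> \<noteq> 0\<close>,
        where q = q and dq = dq and ddq = ddq and c = c]
      \<open>C2_on_unit q dq ddq\<close> ode
    unfolding C2_on_unit_def by blast
  have sum: "A + B = q0 - c"
    using qAB[of 0] \<open>q 0 = q0\<close> by simp
  have neumann: "B * exp (-\<kappa>) = A * exp \<kappa>"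
    using dqAB[of 1] \<open>dq 1 = 0\<close> \<open>\<kappa> \<noteq> 0\<close> by simp
  have "B = B * exp (-\<kappa>) * exp \<kappa>"
    by (simp add: mult.assoc flip: exp_add)
  also have "\<dots> = A * exp (2 * \<kappa>)"
    unfolding neumann by (simp add: mult.assoc flip: exp_add)
  finally have B: "B = A * exp (2 * \<kappa>)" .
  with sum have "A * (1 + exp (2 * \<kappa>)) = q0 - c"
    by (simp add: algebra_simps)
  moreover have "1 + exp (2 * \<kappa>) \<noteq> 0"
    using exp_gt_zero[of "2 * \<kappa>"] by linarith
  ultimately have "A = C2"
    unfolding C2_def by (simp add: eq_divide_eq)
  moreover from this B have "B = C1"
    unfolding C1_def C2_def by simp
  ultimately show "q x = C1 * exp (-\<kappa> * x) + C2 * exp (\<kappa> * x) + c"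
    and "dq x = \<kappa> * (- C1 * exp (-\<kappa> * x) + C2 * exp (\<kappa> * x))"
    using qAB[OF \<open>x \<in> {0..1}\<close>] dqAB[OF \<open>x \<in> {0..1}\<close>] by (simp_all add: algebra_simps)
qed

theorem mainTheorem2:
  fixes L K Lpa t0 \<nu>m \<sigma>1 \<sigma>2 p0 w0 wD ql :: real
    and p p' p'' u u' u'' w w' w'' :: "real \<Rightarrow> real"
  assumes hL: "L > 0" and hK: "K > 0" and hLpa: "Lpa > 0" and ht0: "t0 > 0" and h\<nu>: "\<nu>m > 0"
    and hp: "C2_on_unit p p' p''" and hu: "C2_on_unit u u' u''" and hw: "C2_on_unit w w' w''"
    and ode: "\<forall>x\<in>{0..1}.
        (1/t0) * (\<nu>m * p'' x) - \<sigma>1 * (\<nu>m * u'' x) - \<sigma>2 * (\<nu>m * w'' x)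
        + (Lpa * L^2 / K) * ((1/t0) * (p0 - p x) + \<sigma>1 * u x + \<sigma>2 * (w x - w0)) - ql = 0"
    and bc0: "p 0 = 1" "u 0 = 1" "w 0 = wD"
    and bc1: "p' 1 = 0" "u' 1 = 0" "w' 1 = 0"
  shows "let \<beta> = Lpa * L^2 / K;
             qU = (\<lambda>x. \<beta> * ((1/t0) * (p0 - p x) + \<sigma>1 * u x + \<sigma>2 * (w x - w0)));
             jU = (\<lambda>x. L * \<nu>m * (-(1/t0) * p' x + \<sigma>1 * u' x + \<sigma>2 * w' x));
             lam = sqrt (Lpa * L^2 / (K * \<nu>m));
             q0 = \<beta> * ((1/t0) * (p0 - 1) + \<sigma>1 + \<sigma>2 * (wD - w0));
             C1 = (q0 - ql) * exp (2*lam) / (1 + exp (2*lam));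
             C2 = (q0 - ql) * 1 / (1 + exp (2*lam))
         in (\<forall>x\<in>{0..1}. \<exists>D. (qU has_real_derivative D) (at x within {0..1})
                              \<and> jU x = (K * \<nu>m / (Lpa * L)) * D)
          \<and> (\<forall>x\<in>{0..1}. qU x = C1 * exp (-lam*x) + C2 * exp (lam*x) + ql
                       \<and> jU x = (L/lam) * (-C1 * exp (-lam*x) + C2 * exp (lam*x)))"
proof -
  define \<beta> where "\<beta> = Lpa * L^2 / K"
  define qU where "qU = (\<lambda>x. \<beta> * ((1/t0) * (p0 - p x) + \<sigma>1 * u x + \<sigma>2 * (w x - w0)))"
  define jU where "jU = (\<lambda>x. L * \<nu>m * (-(1/t0) * p' x + \<sigma>1 * u' x + \<sigma>2 * w' x))"
  define lam where "lam = sqrt (Lpa * L^2 / (K * \<nu>m))"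
  define q0 where "q0 = \<beta> * ((1/t0) * (p0 - 1) + \<sigma>1 + \<sigma>2 * (wD - w0))"
  define dq where "dq = (\<lambda>x. \<beta> * (-(1/t0) * p' x + \<sigma>1 * u' x + \<sigma>2 * w' x))"
  define ddq where "ddq = (\<lambda>x. \<beta> * (-(1/t0) * p'' x + \<sigma>1 * u'' x + \<sigma>2 * w'' x))"
  have "qU = (\<lambda>x. \<beta> * (p0 / t0 - \<sigma>2 * w0) + - \<beta> / t0 * p x + \<beta> * \<sigma>1 * u x + \<beta> * \<sigma>2 * w x)"
    and "dq = (\<lambda>x. - \<beta> / t0 * p' x + \<beta> * \<sigma>1 * u' x + \<beta> * \<sigma>2 * w' x)"
    and "ddq = (\<lambda>x. - \<beta> / t0 * p'' x + \<beta> * \<sigma>1 * u'' x + \<beta> * \<sigma>2 * w'' x)"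
    by (simp_all add: qU_def dq_def ddq_def fun_eq_iff algebra_simps)
  with C2_on_unit_linear_combination[OF hp hu hw] have "C2_on_unit qU dq ddq"
    by presburger
  have "\<beta> > 0" "lam > 0"
    using hL hK hLpa h\<nu> by (simp_all add: \<beta>_def lam_def)
  have lam_sq: "lam\<^sup>2 = \<beta> / \<nu>m"
    using hL hK hLpa h\<nu> by (simp add: lam_def \<beta>_def field_simps)
  have "\<nu>m * ddq x = \<beta> * (qU x - ql)" if "x \<in> {0..1}" for x
    using ode[rule_format, OF that, folded \<beta>_def] unfolding qU_def ddq_def by algebra
  then have ode_qU: "\<forall>x\<in>{0..1}. ddq x = lam\<^sup>2 * (qU x - ql)"
    using h\<nu> by (simp add: lam_sq field_simps)
  have "lam \<noteq> 0" "qU 0 = q0" "dq 1 = 0"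
    using \<open>lam > 0\<close> bc0 bc1 by (simp_all add: qU_def q0_def dq_def)
  note profile = exp_second_order_ode_mixed_bvp[OF \<open>lam \<noteq> 0\<close> \<open>C2_on_unit qU dq ddq\<close> ode_qU
      \<open>qU 0 = q0\<close> \<open>dq 1 = 0\<close>]
  have jU_dq: "jU x = (K * \<nu>m / (Lpa * L)) * dq x" for x
    using hL hK hLpa by (simp add: jU_def dq_def \<beta>_def field_simps power2_eq_square)
  have jU_scale: "(K * \<nu>m / (Lpa * L)) * lam = L / lam"
    using hL hK hLpa h\<nu> \<open>lam > 0\<close> lam_sq
    by (simp add: \<beta>_def field_simps power2_eq_square)
  have "\<forall>x\<in>{0..1}. \<exists>D. (qU has_real_derivative D) (at x within {0..1}) \<and> jU x = K * \<nu>m / (Lpa * L) * D"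
    using \<open>C2_on_unit qU dq ddq\<close> jU_dq unfolding C2_on_unit_def by blast
  moreover have "\<forall>x\<in>{0..1}. qU x = (q0 - ql) * exp (2 * lam) / (1 + exp (2 * lam)) * exp (- lam * x)
        + (q0 - ql) * 1 / (1 + exp (2 * lam)) * exp (lam * x) + ql
      \<and> jU x = L / lam * (- ((q0 - ql) * exp (2 * lam) / (1 + exp (2 * lam))) * exp (- lam * x)
        + (q0 - ql) * 1 / (1 + exp (2 * lam)) * exp (lam * x))"
    using profile unfolding jU_dq jU_scale[symmetric] by simp
  ultimately show ?thesis
    unfolding Let_def qU_def jU_def lam_def q0_def \<beta>_def by (rule conjI)
qed

end
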